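(* Let $\{(U_n,V_n)\}_{n\ge1}$ be bivariate random vectors and $\{\mathcal F_n\}_{n\ge1}$ $\sigma$-fields such that: (1) conditionally on $\mathcal F_n$, $(U_n,V_n)\sim N_2(\bm\mu_n,\Sigma_n)$, where the random $\bm\mu_n=(\mu_n(1),\mu_n(2))^\top\in\mathbb R^2$ and $\Sigma_n=\begin{pmatrix}\Sigma_n(1,1)&\Sigma_n(1,2)\\\Sigma_n(1,2)&\Sigma_n(2,2)\end{pmatrix}\in\mathbb R^{2\times2}$ are tight; (2) $\operatorname{Cov}(U_n,V_n\mid\mathcal F_n)\xrightarrow{P}0$; (3) $(\mu_n(1),\Sigma_n(1,1))$ and $(\mu_n(2),\Sigma_n(2,2))$ are mutually independent. Then for all $t_1,t_2\in\mathbb R$, $$\lim_{n\to\infty}\Big|\mathbb E\big[e^{\mathrm i(t_1U_n+t_2V_n)}\big]-\mathbb E\big[e^{\mathrm it_1U_n}\big]\mathbb E\big[e^{\mathrm it_2V_n}\big]\Big|=0.$$ *)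

theory Defs
  imports "HOL-Probability.Probability"
begin

definition tight_seq :: "'a measure \<Rightarrow> (nat \<Rightarrow> 'a \<Rightarrow> 'b::real_normed_vector) \<Rightarrow> bool" where
  "tight_seq M X \<longleftrightarrow>
     (\<forall>e>0. \<exists>K. \<forall>n. measure M {x \<in> space M. norm (X n x) > K} \<le> e)"

definition conv_in_prob :: "'a measure \<Rightarrow> (nat \<Rightarrow> 'a \<Rightarrow> real) \<Rightarrow> real \<Rightarrow> bool" where
  "conv_in_prob M X c \<longleftrightarrow>
     (\<forall>e>0. ((\<lambda>n. measure M {x \<in> space M. \<bar>X n x - c\<bar> > e}) \<longlongrightarrow> 0) sequentially)"

text \<open>Conditionally on the sigma-field F, (U,V) is bivariate normal with (F-measurable)
  mean (m1,m2) and covariance matrix ((s11,s12),(s12,s22)): the parameters are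
  F-measurable, the covariance matrix is positive semidefinite, and the conditional
  characteristic function of (U,V) given F is the Gaussian one,
  E[exp(i(t1 U + t2 V)) | F] = exp(i(t1 m1 + t2 m2) - (t1^2 s11 + 2 t1 t2 s12 + t2^2 s22)/2)
  a.s., stated via its real and imaginary parts.\<close>
definition cond_normal2 ::
  "'a measure \<Rightarrow> 'a measure \<Rightarrow> ('a \<Rightarrow> real) \<Rightarrow> ('a \<Rightarrow> real) \<Rightarrow>
   ('a \<Rightarrow> real) \<Rightarrow> ('a \<Rightarrow> real) \<Rightarrow> ('a \<Rightarrow> real) \<Rightarrow> ('a \<Rightarrow> real) \<Rightarrow> ('a \<Rightarrow> real) \<Rightarrow> bool" where
  "cond_normal2 M F U V m1 m2 s11 s12 s22 \<longleftrightarrow>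
     m1 \<in> borel_measurable F \<and> m2 \<in> borel_measurable F \<and>
     s11 \<in> borel_measurable F \<and> s12 \<in> borel_measurable F \<and> s22 \<in> borel_measurable F \<and>
     (\<forall>x\<in>space M. 0 \<le> s11 x \<and> 0 \<le> s22 x \<and> (s12 x)\<^sup>2 \<le> s11 x * s22 x) \<and>
     (\<forall>t1 t2::real.
        (AE x in M. real_cond_exp M F (\<lambda>y. cos (t1 * U y + t2 * V y)) x =
           exp (- (t1\<^sup>2 * s11 x + 2 * t1 * t2 * s12 x + t2\<^sup>2 * s22 x) / 2)
             * cos (t1 * m1 x + t2 * m2 x)) \<and>
        (AE x in M. real_cond_exp M F (\<lambda>y. sin (t1 * U y + t2 * V y)) x =
           exp (- (t1\<^sup>2 * s11 x + 2 * t1 * t2 * s12 x + t2\<^sup>2 * s22 x) / 2)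
             * sin (t1 * m1 x + t2 * m2 x)))"

end

theory Submission
  imports Defs
begin

(* Conditioning on F n, the joint characteristic function of (U n, V n) is
   E[exp(-Q/2) cis(t1 mu1 + t2 mu2)] with Q = t1^2 S11 + 2 t1 t2 S12 + t2^2 S22, and the marginal
   ones are the cases t2 = 0 and t1 = 0. By the independence of (mu1, S11) and (mu2, S22), the
   product of the marginals is the same expectation with the cross term 2 t1 t2 S12 removed from Q.
   Hence the defect is at most E[min 1 |exp(-t1 t2 S12) - 1|], which tends to 0 because S12 tends
   to 0 in probability and the integrand is bounded. *)

lemma psd2_quadratic_form_nonneg:
  fixes s11 s12 s22 t1 t2 :: real
  assumes "0 \<le> s11" "0 \<le> s22" "s12\<^sup>2 \<le> s11 * s22"
  shows "0 \<le> t1\<^sup>2 * s11 + 2 * t1 * t2 * s12 + t2\<^sup>2 * s22"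
proof (rule ccontr)
  define a b c where "a = t1\<^sup>2 * s11" and "b = t2\<^sup>2 * s22" and "c = t1 * t2 * s12"
  have "0 \<le> a" "0 \<le> b" using assms by (simp_all add: a_def b_def)
  have cab: "c\<^sup>2 \<le> a * b"
    using mult_left_mono[OF assms(3), of "t1\<^sup>2 * t2\<^sup>2"]
    by (simp add: a_def b_def c_def power_mult_distrib mult_ac)
  have amgm: "4 * (a * b) \<le> (a + b)\<^sup>2"
    using zero_le_power2[of "a - b"] by (simp add: power2_eq_square algebra_simps)
  assume "\<not> 0 \<le> t1\<^sup>2 * s11 + 2 * t1 * t2 * s12 + t2\<^sup>2 * s22"
  then have "0 \<le> a + b" "a + b < - 2 * c"
    using \<open>0 \<le> a\<close> \<open>0 \<le> b\<close> by (simp_all add: a_def b_def c_def mult.assoc)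
  then have "(a + b)\<^sup>2 < (- 2 * c)\<^sup>2" by (intro power_strict_mono) auto
  with cab amgm show False by (simp add: power_mult_distrib)
qed

lemma exp_cross_term_defect_le:
  fixes a b c :: real
  assumes "0 \<le> a + b" "0 \<le> a + 2 * c + b"
  shows "\<bar>exp (- (a + 2 * c + b) / 2) - exp (- (a + b) / 2)\<bar> \<le> min 1 \<bar>exp (- c) - 1\<bar>"
proof -
  have "exp (- (a + 2 * c + b) / 2) - exp (- (a + b) / 2) = exp (- (a + b) / 2) * (exp (- c) - 1)"
    by (simp add: exp_add[symmetric] algebra_simps add_divide_distrib diff_divide_distrib)
  moreover have "exp (- (a + b) / 2) \<le> 1" using assms by simp
  ultimately have "\<bar>exp (- (a + 2 * c + b) / 2) - exp (- (a + b) / 2)\<bar> \<le> \<bar>exp (- c) - 1\<bar>"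
    by (simp add: abs_mult mult_left_le_one_le)
  moreover have "exp (- (a + 2 * c + b) / 2) \<le> 1" "exp (- (a + b) / 2) \<le> 1"
    using assms by simp_all
  then have "\<bar>exp (- (a + 2 * c + b) / 2) - exp (- (a + b) / 2)\<bar> \<le> 1"
    using exp_gt_zero[of "- (a + 2 * c + b) / 2"] exp_gt_zero[of "- (a + b) / 2"] by linarith
  ultimately show ?thesis by simp
qed

lemma conv_in_prob_continuous_map:
  assumes "finite_measure M" "\<And>n. X n \<in> borel_measurable M" "conv_in_prob M X 0"
    and "isCont \<phi> 0" "\<phi> 0 = 0"
  shows "conv_in_prob M (\<lambda>n x. \<phi> (X n x)) 0"
  unfolding conv_in_prob_def
proof (intro allI impI)
  fix e :: real assume "e > 0"
  have "\<exists>d>0. \<forall>y. y \<noteq> 0 \<and> norm (y - 0) < d \<longrightarrow> norm (\<phi> y - \<phi> 0) < e"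
    using \<open>isCont \<phi> 0\<close> \<open>e > 0\<close> unfolding isCont_def by (intro LIM_D)
  then obtain d where "d > 0" and d: "\<And>y. \<bar>y\<bar> < d \<Longrightarrow> \<bar>\<phi> y\<bar> < e"
    using \<open>\<phi> 0 = 0\<close> \<open>e > 0\<close> by (metis abs_zero diff_zero real_norm_def)
  have "{x \<in> space M. \<bar>\<phi> (X n x) - 0\<bar> > e} \<subseteq> {x \<in> space M. \<bar>X n x - 0\<bar> > d / 2}" for n
  proof safe
    fix x assume "e < \<bar>\<phi> (X n x) - 0\<bar>"
    then have "\<not> \<bar>X n x\<bar> < d" using d by fastforce
    with \<open>d > 0\<close> show "d / 2 < \<bar>X n x - 0\<bar>" by simp
  qed
  then have le: "measure M {x \<in> space M. \<bar>\<phi> (X n x) - 0\<bar> > e}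
      \<le> measure M {x \<in> space M. \<bar>X n x - 0\<bar> > d / 2}" for n
    using assms(2)[of n] by (intro finite_measure.finite_measure_mono[OF assms(1)]) measurable
  have "d / 2 > 0" using \<open>d > 0\<close> by simp
  then have lim: "(\<lambda>n. measure M {x \<in> space M. \<bar>X n x - 0\<bar> > d / 2}) \<longlonglongrightarrow> 0"
    using assms(3) unfolding conv_in_prob_def by blast
  show "(\<lambda>n. measure M {x \<in> space M. \<bar>\<phi> (X n x) - 0\<bar> > e}) \<longlonglongrightarrow> 0"
    using le by (intro tendsto_sandwich[OF _ _ tendsto_const lim] always_eventually allI) simp_all
qed

lemma conv_in_prob_bounded_integral_tendsto_zero:
  assumes "prob_space M" "\<And>n. X n \<in> borel_measurable M" "conv_in_prob M X 0"
    and bounded: "\<And>n x. x \<in> space M \<Longrightarrow> \<bar>X n x\<bar> \<le> B"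
  shows "(\<lambda>n. LINT x|M. \<bar>X n x\<bar>) \<longlonglongrightarrow> 0"
proof (rule order_tendstoI)
  interpret prob_space M by (rule assms(1))
  show "\<forall>\<^sub>F n in sequentially. a < (LINT x|M. \<bar>X n x\<bar>)" if "a < 0" for a
  proof (intro always_eventually allI)
    fix n
    have "0 \<le> (LINT x|M. \<bar>X n x\<bar>)" by (rule Bochner_Integration.integral_nonneg) simp
    then show "a < (LINT x|M. \<bar>X n x\<bar>)" using that by linarith
  qed
  fix r :: real assume "r > 0"
  define A where "A n = {x \<in> space M. \<bar>X n x - 0\<bar> > r / 2}" for n
  have A_sets [measurable]: "A n \<in> sets M" for n
    using assms(2)[of n] unfolding A_def by measurable
  have "r / 2 > 0" using \<open>r > 0\<close> by simp
  then have "(\<lambda>n. measure M (A n)) \<longlonglongrightarrow> 0"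
    using assms(3) unfolding conv_in_prob_def A_def by blast
  then have "(\<lambda>n. B * measure M (A n)) \<longlonglongrightarrow> 0" by (rule tendsto_mult_right_zero)
  then have small: "\<forall>\<^sub>F n in sequentially. B * measure M (A n) < r / 2"
    by (rule order_tendstoD(2)) (use \<open>r > 0\<close> in simp)
  have bound: "(LINT x|M. \<bar>X n x\<bar>) \<le> r / 2 + B * measure M (A n)" for n
  proof -
    have "(LINT x|M. \<bar>X n x\<bar>) \<le> (LINT x|M. r / 2 + B * indicator (A n) x)"
    proof (rule integral_mono)
      show "integrable M (\<lambda>x. \<bar>X n x\<bar>)"
        using assms(2)[of n] bounded by (intro integrable_const_bound[where B=B] AE_I2) auto
      show "integrable M (\<lambda>x. r / 2 + B * indicator (A n) x)"
        by (intro Bochner_Integration.integrable_add integrable_mult_right integrable_real_indicator)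
          (auto simp: emeasure_eq_measure)
      show "\<bar>X n x\<bar> \<le> r / 2 + B * indicator (A n) x" if "x \<in> space M" for x
        using bounded[OF that, of n] \<open>r > 0\<close> that by (auto simp: A_def indicator_def not_less)
    qed
    also have "\<dots> = r / 2 + B * measure M (A n)"
      by (subst Bochner_Integration.integral_add) (auto simp: prob_space emeasure_eq_measure)
    finally show ?thesis .
  qed
  show "\<forall>\<^sub>F n in sequentially. (LINT x|M. \<bar>X n x\<bar>) < r"
  proof (rule eventually_mono[OF small])
    fix n assume "B * measure M (A n) < r / 2"
    with bound[of n] show "(LINT x|M. \<bar>X n x\<bar>) < r" by linarith
  qed
qed

lemma borel_measurable_cis [measurable]:
  "f \<in> borel_measurable M \<Longrightarrow> (\<lambda>x. cis (f x)) \<in> borel_measurable M"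
  unfolding cis_conv_exp by measurable

lemma integral_cis_eq_by_real_cond_exp:
  assumes "prob_space M" "subalgebra M F" "f \<in> borel_measurable M" "integrable M g"
    and cos: "AE x in M. real_cond_exp M F (\<lambda>y. cos (f y)) x = Re (g x)"
    and sin: "AE x in M. real_cond_exp M F (\<lambda>y. sin (f y)) x = Im (g x)"
  shows "(LINT x|M. cis (f x)) = (LINT x|M. g x)"
proof -
  interpret prob_space M by fact
  interpret sigma_finite_subalgebra M F
    using \<open>subalgebra M F\<close> prob_space_restr_to_subalg[OF \<open>subalgebra M F\<close> \<open>prob_space M\<close>]
    by (intro sigma_finite_subalgebra.intro) (auto intro: prob_space_imp_sigma_finite)
  note [measurable] = \<open>f \<in> borel_measurable M\<close> borel_measurable_integrable[OF \<open>integrable M g\<close>]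
  have int_cis: "integrable M (\<lambda>x. cis (f x))"
    and int_cos: "integrable M (\<lambda>x. cos (f x))" and int_sin: "integrable M (\<lambda>x. sin (f x))"
    by (intro integrable_const_bound[where B=1] AE_I2; simp)+
  have "Re (LINT x|M. cis (f x)) = (LINT x|M. cos (f x))"
    using integral_Re[OF int_cis] by simp
  also have "\<dots> = (LINT x|M. real_cond_exp M F (\<lambda>y. cos (f y)) x)"
    using real_cond_exp_int(2)[OF int_cos] by simp
  also have "\<dots> = (LINT x|M. Re (g x))"
    by (rule integral_cong_AE[OF borel_measurable_cond_exp2 _ cos]) measurable
  also have "\<dots> = Re (LINT x|M. g x)"
    using integral_Re[OF \<open>integrable M g\<close>] .
  finally have Re_eq: "Re (LINT x|M. cis (f x)) = Re (LINT x|M. g x)" .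
  have "Im (LINT x|M. cis (f x)) = (LINT x|M. sin (f x))"
    using integral_Im[OF int_cis] by simp
  also have "\<dots> = (LINT x|M. real_cond_exp M F (\<lambda>y. sin (f y)) x)"
    using real_cond_exp_int(2)[OF int_sin] by simp
  also have "\<dots> = (LINT x|M. Im (g x))"
    by (rule integral_cong_AE[OF borel_measurable_cond_exp2 _ sin]) measurable
  also have "\<dots> = Im (LINT x|M. g x)"
    using integral_Im[OF \<open>integrable M g\<close>] .
  finally show ?thesis using Re_eq by (simp add: complex_eq_iff)
qed

lemma cond_normal2_measurable:
  assumes "subalgebra M F" "cond_normal2 M F U V m1 m2 s11 s12 s22"
  shows "m1 \<in> borel_measurable M" "m2 \<in> borel_measurable M"
    and "s11 \<in> borel_measurable M" "s12 \<in> borel_measurable M" "s22 \<in> borel_measurable M"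
  using assms measurable_from_subalg[OF \<open>subalgebra M F\<close>] unfolding cond_normal2_def by blast+

lemma cond_normal2_char_fun:
  assumes "prob_space M" "subalgebra M F" "U \<in> borel_measurable M" "V \<in> borel_measurable M"
    and normal: "cond_normal2 M F U V m1 m2 s11 s12 s22"
  shows "(LINT x|M. cis (t1 * U x + t2 * V x)) =
    (LINT x|M. complex_of_real (exp (- (t1\<^sup>2 * s11 x + 2 * t1 * t2 * s12 x + t2\<^sup>2 * s22 x) / 2))
      * cis (t1 * m1 x + t2 * m2 x))" (is "_ = (LINT x|M. ?g x)")
proof (rule integral_cis_eq_by_real_cond_exp[OF assms(1,2)])
  interpret prob_space M by fact
  note [measurable] = assms(3,4) cond_normal2_measurable[OF assms(2) normal]
  show "(\<lambda>x. t1 * U x + t2 * V x) \<in> borel_measurable M" by measurable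
  have "norm (?g x) \<le> 1" if "x \<in> space M" for x
  proof -
    have "0 \<le> t1\<^sup>2 * s11 x + 2 * t1 * t2 * s12 x + t2\<^sup>2 * s22 x"
      using normal that unfolding cond_normal2_def by (blast intro: psd2_quadratic_form_nonneg)
    then show ?thesis by (simp add: norm_mult)
  qed
  then show "integrable M ?g"
    by (intro integrable_const_bound[where B=1] AE_I2) auto
  show "AE x in M. real_cond_exp M F (\<lambda>y. cos (t1 * U y + t2 * V y)) x = Re (?g x)"
    and "AE x in M. real_cond_exp M F (\<lambda>y. sin (t1 * U y + t2 * V y)) x = Im (?g x)"
    using normal unfolding cond_normal2_def by simp_all
qed

lemma cond_normal2_char_fun_marginals_mult:
  assumes "prob_space M" "subalgebra M F" "U \<in> borel_measurable M" "V \<in> borel_measurable M"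
    and normal: "cond_normal2 M F U V m1 m2 s11 s12 s22"
    and indep: "prob_space.indep_var M borel (\<lambda>x. (m1 x, s11 x)) borel (\<lambda>x. (m2 x, s22 x))"
  shows "(LINT x|M. cis (t1 * U x)) * (LINT x|M. cis (t2 * V x)) =
    (LINT x|M. complex_of_real (exp (- (t1\<^sup>2 * s11 x + t2\<^sup>2 * s22 x) / 2))
      * cis (t1 * m1 x + t2 * m2 x))"
proof -
  interpret prob_space M by fact
  note [measurable] = cond_normal2_measurable[OF assms(2) normal]
  define \<phi>1 \<phi>2 :: "real \<times> real \<Rightarrow> complex"
    where "\<phi>1 p = complex_of_real (exp (- (t1\<^sup>2 * snd p) / 2)) * cis (t1 * fst p)"
      and "\<phi>2 p = complex_of_real (exp (- (t2\<^sup>2 * snd p) / 2)) * cis (t2 * fst p)" for p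
  define X1 X2 where "X1 = (\<lambda>x. \<phi>1 (m1 x, s11 x))" and "X2 = (\<lambda>x. \<phi>2 (m2 x, s22 x))"
  have marginals: "(LINT x|M. cis (t1 * U x)) = (LINT x|M. X1 x)"
    "(LINT x|M. cis (t2 * V x)) = (LINT x|M. X2 x)"
    using cond_normal2_char_fun[OF assms(1-5), of t1 0] cond_normal2_char_fun[OF assms(1-5), of 0 t2]
    by (simp_all add: X1_def X2_def \<phi>1_def \<phi>2_def)
  have "indep_var borel (\<phi>1 \<circ> (\<lambda>x. (m1 x, s11 x))) borel (\<phi>2 \<circ> (\<lambda>x. (m2 x, s22 x)))"
    unfolding \<phi>1_def \<phi>2_def
    by (intro indep_var_compose[OF indep])
      (intro borel_measurable_continuous_onI continuous_intros; simp)+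
  then have indep_X: "indep_var borel X1 borel X2"
    by (simp add: comp_def X1_def X2_def)
  have "0 \<le> s11 x" "0 \<le> s22 x" if "x \<in> space M" for x
    using normal that unfolding cond_normal2_def by auto
  then have int_X: "integrable M X1" "integrable M X2"
    by (auto simp: X1_def X2_def \<phi>1_def \<phi>2_def norm_mult intro!: integrable_const_bound[where B=1])
  have "(LINT x|M. cis (t1 * U x)) * (LINT x|M. cis (t2 * V x)) = (LINT x|M. X1 x * X2 x)"
    unfolding marginals by (rule indep_var_lebesgue_integral[OF indep_X int_X, symmetric])
  also have "\<dots> = (LINT x|M. complex_of_real (exp (- (t1\<^sup>2 * s11 x + t2\<^sup>2 * s22 x) / 2))
      * cis (t1 * m1 x + t2 * m2 x))"
  proof (rule Bochner_Integration.integral_cong[OF refl])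
    fix x
    have "exp (- (t1\<^sup>2 * s11 x + t2\<^sup>2 * s22 x) / 2)
        = exp (- (t1\<^sup>2 * s11 x) / 2) * exp (- (t2\<^sup>2 * s22 x) / 2)"
      by (simp add: exp_add[symmetric] add_divide_distrib)
    then show "X1 x * X2 x = complex_of_real (exp (- (t1\<^sup>2 * s11 x + t2\<^sup>2 * s22 x) / 2))
        * cis (t1 * m1 x + t2 * m2 x)"
      by (simp add: X1_def X2_def \<phi>1_def \<phi>2_def cis_mult[symmetric] mult_ac)
  qed
  finally show ?thesis .
qed

lemma cond_normal2_char_fun_defect_le:
  assumes "prob_space M" "subalgebra M F" "U \<in> borel_measurable M" "V \<in> borel_measurable M"
    and normal: "cond_normal2 M F U V m1 m2 s11 s12 s22"
    and indep: "prob_space.indep_var M borel (\<lambda>x. (m1 x, s11 x)) borel (\<lambda>x. (m2 x, s22 x))"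
  shows "cmod ((LINT x|M. cis (t1 * U x + t2 * V x))
            - (LINT x|M. cis (t1 * U x)) * (LINT x|M. cis (t2 * V x)))
    \<le> (LINT x|M. min 1 \<bar>exp (- (t1 * t2 * s12 x)) - 1\<bar>)"
proof -
  interpret prob_space M by fact
  note [measurable] = cond_normal2_measurable[OF assms(2) normal]
  define a b c \<theta> where "a x = t1\<^sup>2 * s11 x" and "b x = t2\<^sup>2 * s22 x" and "c x = t1 * t2 * s12 x"
    and "\<theta> x = t1 * m1 x + t2 * m2 x" for x
  define D where "D x = exp (- (a x + 2 * c x + b x) / 2) - exp (- (a x + b x) / 2)" for x
  have [measurable]: "a \<in> borel_measurable M" "b \<in> borel_measurable M" "c \<in> borel_measurable M"
    "\<theta> \<in> borel_measurable M"
    unfolding a_def[abs_def] b_def[abs_def] c_def[abs_def] \<theta>_def[abs_def] by measurable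
  have nonneg: "0 \<le> a x + b x" "0 \<le> a x + 2 * c x + b x" if "x \<in> space M" for x
    using normal that psd2_quadratic_form_nonneg[of "s11 x" "s22 x" "s12 x" t1 t2]
    unfolding cond_normal2_def a_def b_def c_def by (auto simp: mult.assoc)
  have "norm (complex_of_real (exp (- (a x + 2 * c x + b x) / 2)) * cis (\<theta> x)) \<le> 1"
    "norm (complex_of_real (exp (- (a x + b x) / 2)) * cis (\<theta> x)) \<le> 1"
    if "x \<in> space M" for x
    using nonneg[OF that] by (simp_all add: norm_mult)
  then have "integrable M (\<lambda>x. complex_of_real (exp (- (a x + 2 * c x + b x) / 2)) * cis (\<theta> x))"
    "integrable M (\<lambda>x. complex_of_real (exp (- (a x + b x) / 2)) * cis (\<theta> x))"
    by (intro integrable_const_bound[where B=1] AE_I2; simp)+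
  then have "(LINT x|M. cis (t1 * U x + t2 * V x))
      - (LINT x|M. cis (t1 * U x)) * (LINT x|M. cis (t2 * V x))
      = (LINT x|M. complex_of_real (D x) * cis (\<theta> x))"
    using cond_normal2_char_fun[OF assms(1-5), of t1 t2]
      cond_normal2_char_fun_marginals_mult[OF assms, of t1 t2]
    by (simp add: a_def b_def c_def D_def \<theta>_def mult.assoc left_diff_distrib)
  then have "cmod ((LINT x|M. cis (t1 * U x + t2 * V x))
      - (LINT x|M. cis (t1 * U x)) * (LINT x|M. cis (t2 * V x))) \<le> (LINT x|M. \<bar>D x\<bar>)"
    using integral_norm_bound[of M "\<lambda>x. complex_of_real (D x) * cis (\<theta> x)"] by (simp add: norm_mult)
  also have "\<dots> \<le> (LINT x|M. min 1 \<bar>exp (- (t1 * t2 * s12 x)) - 1\<bar>)"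
  proof (rule integral_mono)
    show D_le: "\<bar>D x\<bar> \<le> min 1 \<bar>exp (- (t1 * t2 * s12 x)) - 1\<bar>" if "x \<in> space M" for x
      using exp_cross_term_defect_le[OF nonneg[OF that]] by (simp add: D_def c_def)
    then have "norm \<bar>D x\<bar> \<le> 1" if "x \<in> space M" for x
      using that by (simp add: min_le_iff_disj)
    then show "integrable M (\<lambda>x. \<bar>D x\<bar>)"
      by (intro integrable_const_bound[where B=1] AE_I2) (auto simp: D_def)
    show "integrable M (\<lambda>x. min 1 \<bar>exp (- (t1 * t2 * s12 x)) - 1\<bar>)"
      by (intro integrable_const_bound[where B=1] AE_I2) (simp, measurable)
  qed
  finally show ?thesis .
qed

theorem lemmaA1:
  fixes M :: "'a measure"
    and F :: "nat \<Rightarrow> 'a measure"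
    and U V :: "nat \<Rightarrow> 'a \<Rightarrow> real"
    and mu1 mu2 S11 S12 S22 :: "nat \<Rightarrow> 'a \<Rightarrow> real"
  assumes "prob_space M"
    and "\<And>n. subalgebra M (F n)"
    and "\<And>n. U n \<in> borel_measurable M"
    and "\<And>n. V n \<in> borel_measurable M"
    and "\<And>n. cond_normal2 M (F n) (U n) (V n) (mu1 n) (mu2 n) (S11 n) (S12 n) (S22 n)"
    and "tight_seq M (\<lambda>n x. (mu1 n x, mu2 n x))"
    and "tight_seq M (\<lambda>n x. (S11 n x, S12 n x, S22 n x))"
    and "conv_in_prob M S12 0"
    and "\<And>n. prob_space.indep_var M borel (\<lambda>x. (mu1 n x, S11 n x)) borel (\<lambda>x. (mu2 n x, S22 n x))"
  shows "((\<lambda>n. cmod ((LINT x|M. cis (t1 * U n x + t2 * V n x))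
                    - (LINT x|M. cis (t1 * U n x)) * (LINT x|M. cis (t2 * V n x))))
           \<longlongrightarrow> 0) sequentially"
proof -
  define \<psi> where "\<psi> y = min 1 \<bar>exp (- (t1 * t2 * y)) - 1\<bar>" for y
  have S12_measurable: "S12 n \<in> borel_measurable M" for n
    using cond_normal2_measurable(4)[OF assms(2,5)] .
  have "isCont \<psi> 0"
    unfolding \<psi>_def by (intro continuous_intros)
  have "conv_in_prob M (\<lambda>n x. \<psi> (S12 n x)) 0"
    using prob_space.axioms(1)[OF assms(1)] S12_measurable assms(8) \<open>isCont \<psi> 0\<close>
    by (rule conv_in_prob_continuous_map) (simp add: \<psi>_def)
  moreover have "(\<lambda>x. \<psi> (S12 n x)) \<in> borel_measurable M" for n
    unfolding \<psi>_def using S12_measurable by measurable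
  ultimately have lim: "(\<lambda>n. LINT x|M. \<bar>\<psi> (S12 n x)\<bar>) \<longlonglongrightarrow> 0"
    using conv_in_prob_bounded_integral_tendsto_zero[OF assms(1), of "\<lambda>n x. \<psi> (S12 n x)" 1]
    by (simp add: \<psi>_def)
  have bound: "cmod ((LINT x|M. cis (t1 * U n x + t2 * V n x))
                    - (LINT x|M. cis (t1 * U n x)) * (LINT x|M. cis (t2 * V n x)))
      \<le> (LINT x|M. \<bar>\<psi> (S12 n x)\<bar>)" for n
    using cond_normal2_char_fun_defect_le[OF assms(1-5) assms(9)] by (simp add: \<psi>_def)
  show ?thesis
    by (intro tendsto_sandwich[OF _ _ tendsto_const lim] always_eventually allI norm_ge_zero bound)
qed

end
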